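(* Let $p$ be a prime, $R=\mathbb{F}_p[x,x^{-1}]$, $n\ge1$. Let $U$ and $U_m$ ($m\ge1$) be $R$-submodules of $R^n$ with $U\subset U_m$ and ${\rm rk}(U)={\rm rk}(U_m)$ for all $m$, and suppose $U_m\to U$. Then $U_m=U$ for all sufficiently large $m$.
   Context: The rank ${\rm rk}$ of a finitely generated $R$-module is the maximal number of elements freely generating a free submodule ($0$ if none). Convergence $U_m\to U$ of subsets of $R^n$ means that for every $v\in R^n$, the truth value of $v\in U_m$ is eventually equal to that of $v\in U$. *)

theory Defs
  imports "Berlekamp_Zassenhaus.Finite_Field" "HOL-Computational_Algebra.Formal_Laurent_Series" "HOL-Library.Function_Algebras"
begin

text \<open>The ring R = F_p[x,x^-1] of Laurent polynomials, as the subring of formal Laurent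
series (over F_p = 'p mod_ring, with CARD('p) prime) having finite support.\<close>
definition laurent_polys :: "'a::zero fls set" where
  "laurent_polys = {f. finite {k. fls_nth f k \<noteq> 0}}"

text \<open>R^n is realised as functions from a finite index type 'n (n = CARD('n) >= 1)
with all coordinates in R.\<close>
definition Rn :: "('n::finite \<Rightarrow> 'a::zero fls) set" where
  "Rn = {v. \<forall>i. v i \<in> laurent_polys}"

definition smult_vec :: "'a::times \<Rightarrow> ('n \<Rightarrow> 'a) \<Rightarrow> ('n \<Rightarrow> 'a)" where
  "smult_vec c v = (\<lambda>i. c * v i)"

definition is_submodule :: "('n::finite \<Rightarrow> 'a::comm_ring_1 fls) set \<Rightarrow> bool" where
  "is_submodule U \<longleftrightarrow> U \<subseteq> Rn \<and> 0 \<in> U \<and> (\<forall>u\<in>U. \<forall>v\<in>U. u + v \<in> U)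
     \<and> (\<forall>c\<in>laurent_polys. \<forall>u\<in>U. smult_vec c u \<in> U)"

definition R_lin_indep :: "('n::finite \<Rightarrow> 'a::comm_ring_1 fls) set \<Rightarrow> bool" where
  "R_lin_indep S \<longleftrightarrow> finite S \<and>
     (\<forall>c. (\<forall>v\<in>S. c v \<in> laurent_polys) \<longrightarrow> (\<Sum>v\<in>S. smult_vec (c v) v) = 0
        \<longrightarrow> (\<forall>v\<in>S. c v = 0))"

definition rk :: "('n::finite \<Rightarrow> 'a::comm_ring_1 fls) set \<Rightarrow> nat" where
  "rk U = Sup {card S | S. S \<subseteq> U \<and> R_lin_indep S}"

definition set_converges :: "(nat \<Rightarrow> 'b set) \<Rightarrow> 'b set \<Rightarrow> bool" where
  "set_converges Us U \<longleftrightarrow> (\<forall>v. eventually (\<lambda>m. (v \<in> Us m) = (v \<in> U)) sequentially)"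

end

theory Submission
  imports Defs
begin

text \<open>Choose S \<subseteq> U independent with card S = rk U. As rk (Us m) = rk U, every w \<in> Us m has a
  nonzero multiple in the R-span of S, and Gaussian elimination yields a single denominator D with
  D w in that span for all such w. Since R / D R is finite (F_p is finite), reducing coefficients
  modulo D shows that all these w lie in finitely many cosets f + span S with f from a finite
  set F independent of m. Convergence is uniform on F, so eventually f \<in> Us m iff f \<in> U, and
  then w = f + (w - f) \<in> U.\<close>

unbundle fps_syntax

section \<open>The ring of Laurent polynomials\<close>

lemma laurent_polys_iff: "f \<in> laurent_polys \<longleftrightarrow> (\<exists>b. \<forall>k>b. f $$ k = 0)"
proof
  assume "f \<in> laurent_polys"
  then have fin: "finite {k. f $$ k \<noteq> 0}" by (simp add: laurent_polys_def)
  show "\<exists>b. \<forall>k>b. f $$ k = 0"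
  proof (intro exI allI impI)
    fix k assume "k > Max (insert 0 {k. f $$ k \<noteq> 0})"
    then show "f $$ k = 0" using Max_ge[of "insert 0 {k. f $$ k \<noteq> 0}" k] fin by force
  qed
next
  assume "\<exists>b. \<forall>k>b. f $$ k = 0"
  then obtain b where b: "\<forall>k>b. f $$ k = 0" by blast
  have "{k. f $$ k \<noteq> 0} \<subseteq> {fls_subdegree f..b}"
    using b by (auto simp: not_less[symmetric] intro: ccontr)
  then show "f \<in> laurent_polys" unfolding laurent_polys_def
    using finite_subset by blast
qed

lemma laurent_polys_zero [simp]: "0 \<in> laurent_polys"
  by (simp add: laurent_polys_def)

lemma laurent_polys_one [simp]: "1 \<in> laurent_polys"
  unfolding laurent_polys_iff by (rule exI[of _ 0]) auto

lemma laurent_polys_shift_const [simp]: "fls_shift k (fls_const a) \<in> laurent_polys"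
  unfolding laurent_polys_iff by (rule exI[of _ "-k"]) auto

lemma laurent_polys_add [intro]:
  "f \<in> laurent_polys \<Longrightarrow> g \<in> laurent_polys \<Longrightarrow> f + g \<in> laurent_polys"
  unfolding laurent_polys_iff by (metis add.right_neutral fls_plus_nth max.strict_boundedE)

lemma laurent_polys_uminus [intro]: "(f::'a::ab_group_add fls) \<in> laurent_polys \<Longrightarrow> - f \<in> laurent_polys"
  unfolding laurent_polys_iff by auto

lemma laurent_polys_diff [intro]:
  "(f::'a::ab_group_add fls) \<in> laurent_polys \<Longrightarrow> g \<in> laurent_polys \<Longrightarrow> f - g \<in> laurent_polys"
  using laurent_polys_add[of f "-g"] laurent_polys_uminus[of g] by simp

lemma laurent_polys_mult [intro]:
  fixes f g :: "'a::comm_ring_1 fls"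
  assumes "f \<in> laurent_polys" "g \<in> laurent_polys"
  shows "f * g \<in> laurent_polys"
proof -
  obtain bf bg where bf: "\<forall>k>bf. f $$ k = 0" and bg: "\<forall>k>bg. g $$ k = 0"
    using assms by (auto simp: laurent_polys_iff)
  have "(f * g) $$ n = 0" if n: "n > bf + bg" for n
  proof -
    have "(f * g) $$ n = (\<Sum>i=fls_subdegree f..n - fls_subdegree g. f $$ i * g $$ (n - i))"
      by (rule fls_times_nth(2))
    also have "\<dots> = 0"
    proof (rule sum.neutral, rule ballI)
      fix i show "f $$ i * g $$ (n - i) = 0"
        using bf bg n by (cases "i > bf") auto
    qed
    finally show ?thesis .
  qed
  then show ?thesis by (auto simp: laurent_polys_iff)
qed

lemma laurent_polys_sum [intro]:
  "(\<And>j. j \<in> J \<Longrightarrow> f j \<in> laurent_polys) \<Longrightarrow> (\<Sum>j\<in>J. f j :: 'a::ab_group_add fls) \<in> laurent_polys"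
  by (induction J rule: infinite_finite_induct) auto

section \<open>Linear combinations, spans and Gaussian elimination\<close>

definition lincomb :: "('j \<Rightarrow> 'a::semiring_0) \<Rightarrow> ('j \<Rightarrow> 'n \<Rightarrow> 'a) \<Rightarrow> 'j set \<Rightarrow> 'n \<Rightarrow> 'a" where
  "lincomb c g J x = (\<Sum>j\<in>J. c j * g j x)"

definition R_span :: "('j \<Rightarrow> 'n \<Rightarrow> 'a::comm_ring_1 fls) \<Rightarrow> 'j set \<Rightarrow> ('n \<Rightarrow> 'a fls) set" where
  "R_span g J = {lincomb c g J | c. \<forall>j\<in>J. c j \<in> laurent_polys}"

lemma sum_smult_vec_eq_lincomb: "(\<Sum>j\<in>J. smult_vec (c j) (g j)) = lincomb c g J"
  by (induction J rule: infinite_finite_induct) (simp_all add: fun_eq_iff lincomb_def smult_vec_def)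

definition R_dependent :: "('j \<Rightarrow> 'n \<Rightarrow> 'a::comm_ring_1 fls) \<Rightarrow> 'j set \<Rightarrow> bool" where
  "R_dependent g J \<longleftrightarrow> (\<exists>c. (\<forall>j\<in>J. c j \<in> laurent_polys) \<and> lincomb c g J = 0 \<and> (\<exists>j\<in>J. c j \<noteq> 0))"

lemma R_lin_indep_iff: "R_lin_indep S \<longleftrightarrow> finite S \<and> \<not> R_dependent (\<lambda>v. v) S"
  by (auto simp: R_lin_indep_def R_dependent_def sum_smult_vec_eq_lincomb)

lemma lincomb_in_laurent_polys [intro]:
  fixes c :: "'j \<Rightarrow> 'a::comm_ring_1 fls"
  shows "(\<And>j. j \<in> J \<Longrightarrow> c j \<in> laurent_polys) \<Longrightarrow> (\<And>j. j \<in> J \<Longrightarrow> g j x \<in> laurent_polys)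
    \<Longrightarrow> lincomb c g J x \<in> laurent_polys"
  unfolding lincomb_def by (blast intro: laurent_polys_sum laurent_polys_mult)

lemma lincomb_insert:
  "finite J \<Longrightarrow> j \<notin> J \<Longrightarrow> lincomb c g (insert j J) = smult_vec (c j) (g j) + lincomb c g J"
  by (simp add: fun_eq_iff lincomb_def smult_vec_def)

lemma lincomb_cong: "(\<And>j. j \<in> J \<Longrightarrow> c j = c' j) \<Longrightarrow> lincomb c g J = lincomb c' g J"
  by (simp add: fun_eq_iff lincomb_def)

lemma lincomb_scale: "lincomb (\<lambda>j. a * c j) g J = smult_vec a (lincomb c g J)"
  by (simp add: fun_eq_iff smult_vec_def lincomb_def sum_distrib_left mult.assoc)

lemma smult_vec_zero_right [simp]: "smult_vec (c :: 'a::mult_zero) 0 = 0"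
  by (simp add: smult_vec_def fun_eq_iff)

text \<open>One step of Gaussian elimination: coordinate i of v is cleared against the pivot
  vector h, where a = h i.\<close>
definition eliminate_coord :: "'a::comm_ring \<Rightarrow> 'n \<Rightarrow> ('n \<Rightarrow> 'a) \<Rightarrow> ('n \<Rightarrow> 'a) \<Rightarrow> 'n \<Rightarrow> 'a" where
  "eliminate_coord a i h v x = a * v x - v i * h x"

lemma eliminate_coord_pivot [simp]: "eliminate_coord (h i) i h h = 0"
  by (simp add: eliminate_coord_def fun_eq_iff mult.commute)

lemma eliminate_coord_zero [simp]: "eliminate_coord a i h 0 = 0"
  by (simp add: eliminate_coord_def fun_eq_iff)

lemma eliminate_coord_add:
  "eliminate_coord a i h (u + v) = eliminate_coord a i h u + eliminate_coord a i h v"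
  by (simp add: eliminate_coord_def fun_eq_iff algebra_simps)

lemma eliminate_coord_smult:
  "eliminate_coord a i h (smult_vec t v) = smult_vec t (eliminate_coord a i h v)"
  by (simp add: eliminate_coord_def smult_vec_def fun_eq_iff algebra_simps)

lemma lincomb_eliminate_coord:
  "lincomb c (\<lambda>j. eliminate_coord a i h (g j)) J = eliminate_coord a i h (lincomb c g J)"
  by (simp add: fun_eq_iff lincomb_def eliminate_coord_def algebra_simps sum_distrib_left
      sum_distrib_right sum_subtractf)

lemma eliminate_coord_eqD:
  assumes "eliminate_coord a i h v = eliminate_coord a i h u"
  shows "smult_vec a v = smult_vec (v i - u i) h + smult_vec a u"
proof
  fix x
  have "a * v x = (a * v x - v i * h x) + v i * h x" by simp
  also have "\<dots> = (a * u x - u i * h x) + v i * h x"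
    using fun_cong[OF assms, of x] by (simp add: eliminate_coord_def)
  also have "\<dots> = (v i - u i) * h x + a * u x" by (simp add: algebra_simps)
  finally show "smult_vec a v x = (smult_vec (v i - u i) h + smult_vec a u) x"
    by (simp add: smult_vec_def)
qed

lemma eliminate_coord_Rn:
  fixes a :: "'a::comm_ring_1 fls"
  shows "a \<in> laurent_polys \<Longrightarrow> h \<in> Rn \<Longrightarrow> v \<in> Rn \<Longrightarrow> eliminate_coord a i h v \<in> Rn"
  by (auto simp: eliminate_coord_def Rn_def intro!: laurent_polys_diff laurent_polys_mult)

lemma eliminate_coord_support:
  assumes "{x. v x \<noteq> 0} \<subseteq> insert i I" "{x. h x \<noteq> 0} \<subseteq> insert i I"
  shows "{x. eliminate_coord (h i) i h v x \<noteq> 0} \<subseteq> I"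
proof
  fix x assume x: "x \<in> {x. eliminate_coord (h i) i h v x \<noteq> 0}"
  show "x \<in> I"
  proof (rule ccontr)
    assume "x \<notin> I"
    moreover have "x \<noteq> i" using x by (auto simp: eliminate_coord_def mult.commute)
    ultimately have "v x = 0" "h x = 0" using assms by blast+
    then show False using x by (simp add: eliminate_coord_def)
  qed
qed

lemma R_span_empty [simp]: "R_span g {} = {0}"
  by (auto simp: R_span_def lincomb_def fun_eq_iff)

lemma R_span_insert:
  fixes g :: "'j \<Rightarrow> 'n \<Rightarrow> 'a::comm_ring_1 fls"
  assumes "finite J" "j0 \<notin> J"
  shows "R_span g (insert j0 J) = {smult_vec c0 (g j0) + u | c0 u. c0 \<in> laurent_polys \<and> u \<in> R_span g J}"
proof safe
  fix v assume "v \<in> R_span g (insert j0 J)"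
  then obtain c where "\<forall>j\<in>insert j0 J. c j \<in> laurent_polys" "v = lincomb c g (insert j0 J)"
    by (auto simp: R_span_def)
  then show "\<exists>c0 u. v = smult_vec c0 (g j0) + u \<and> c0 \<in> laurent_polys \<and> u \<in> R_span g J"
    using assms by (auto simp: lincomb_insert R_span_def)
next
  fix c0 :: "'a fls" and u assume c0: "c0 \<in> laurent_polys" and "u \<in> R_span g J"
  then obtain c where c: "\<forall>j\<in>J. c j \<in> laurent_polys" "u = lincomb c g J"
    by (auto simp: R_span_def)
  have "lincomb (c(j0 := c0)) g J = lincomb c g J"
    using assms(2) by (intro lincomb_cong) auto
  then have "smult_vec c0 (g j0) + u = lincomb (c(j0 := c0)) g (insert j0 J)"
    using assms c by (simp add: lincomb_insert)
  then show "smult_vec c0 (g j0) + u \<in> R_span g (insert j0 J)"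
    using c c0 unfolding R_span_def by force
qed

lemma R_span_smult:
  assumes "a \<in> laurent_polys" "u \<in> R_span g J"
  shows "smult_vec a u \<in> R_span g J"
proof -
  obtain c where c: "\<forall>j\<in>J. c j \<in> laurent_polys" "u = lincomb c g J"
    using assms(2) by (auto simp: R_span_def)
  then have "smult_vec a u = lincomb (\<lambda>j. a * c j) g J"
    by (simp add: lincomb_scale)
  then show ?thesis
    using assms(1) c(1) unfolding R_span_def by blast
qed

lemma R_span_eliminate_coord:
  "R_span (\<lambda>j. eliminate_coord a i h (g j)) J = eliminate_coord a i h ` R_span g J"
  unfolding R_span_def by (auto simp: lincomb_eliminate_coord image_iff)

lemma submodule_zero: "is_submodule U \<Longrightarrow> 0 \<in> U"
  by (simp add: is_submodule_def)

lemma submodule_add: "is_submodule U \<Longrightarrow> u \<in> U \<Longrightarrow> v \<in> U \<Longrightarrow> u + v \<in> U"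
  by (simp add: is_submodule_def)

lemma submodule_smult:
  "is_submodule U \<Longrightarrow> c \<in> laurent_polys \<Longrightarrow> u \<in> U \<Longrightarrow> smult_vec c u \<in> U"
  by (simp add: is_submodule_def)

lemma submodule_diff:
  assumes "is_submodule U" "u \<in> U" "v \<in> U"
  shows "u - v \<in> U"
proof -
  have "u + smult_vec (-1) v \<in> U"
    using assms laurent_polys_uminus[OF laurent_polys_one] by (blast intro: submodule_add submodule_smult)
  moreover have "u + smult_vec (-1) v = u - v" by (simp add: fun_eq_iff smult_vec_def)
  ultimately show ?thesis by simp
qed

lemma R_span_subset_submodule:
  assumes "is_submodule U" "finite J" "g ` J \<subseteq> U"
  shows "R_span g J \<subseteq> U"
  using assms(2,3)
proof (induction J rule: finite_induct)
  case empty
  then show ?case using submodule_zero[OF assms(1)] by simp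
next
  case (insert j J)
  then show ?case
    unfolding R_span_insert[OF insert.hyps]
    using assms(1) by (auto intro!: submodule_add submodule_smult)
qed

lemma is_submodule_Rn: "is_submodule (Rn :: ('n::finite \<Rightarrow> 'a::comm_ring_1 fls) set)"
  by (auto simp: is_submodule_def Rn_def smult_vec_def)

lemma R_span_subset_Rn: "g ` J \<subseteq> Rn \<Longrightarrow> finite J \<Longrightarrow> R_span g J \<subseteq> Rn"
  by (rule R_span_subset_submodule[OF is_submodule_Rn])

lemma R_dependent_pivot:
  fixes g :: "'j \<Rightarrow> 'n \<Rightarrow> 'a::idom fls"
  assumes J: "finite J" "j0 \<notin> J" and pivot: "g j0 i \<noteq> 0" "g j0 i \<in> laurent_polys"
    and R: "\<forall>j\<in>J. g j i \<in> laurent_polys"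
    and dep: "R_dependent (\<lambda>j. eliminate_coord (g j0 i) i (g j0) (g j)) J"
  shows "R_dependent g (insert j0 J)"
proof -
  define a where "a = g j0 i"
  obtain c where c: "\<forall>j\<in>J. c j \<in> laurent_polys"
    "lincomb c (\<lambda>j. eliminate_coord a i (g j0) (g j)) J = 0" "\<exists>j\<in>J. c j \<noteq> 0"
    using dep by (auto simp: R_dependent_def a_def)
  define L where "L = lincomb c g J"
  have "eliminate_coord a i (g j0) L = eliminate_coord a i (g j0) 0"
    using c(2) by (simp add: L_def lincomb_eliminate_coord)
  from eliminate_coord_eqD[OF this] have aL: "smult_vec a L = smult_vec (L i) (g j0)"
    by simp
  define c' where "c' = (\<lambda>j. if j = j0 then - L i else a * c j)"
  have "lincomb c' g J = lincomb (\<lambda>j. a * c j) g J"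
    using J(2) by (intro lincomb_cong) (auto simp: c'_def)
  moreover have "c' j0 = - L i" by (simp add: c'_def)
  ultimately have "lincomb c' g (insert j0 J) = smult_vec (- L i) (g j0) + smult_vec a L"
    using J by (simp add: lincomb_insert lincomb_scale L_def)
  also have "\<dots> = 0"
    using aL by (simp add: smult_vec_def fun_eq_iff)
  finally have "lincomb c' g (insert j0 J) = 0" .
  moreover have "\<forall>j\<in>insert j0 J. c' j \<in> laurent_polys"
    using c(1) pivot R by (auto simp: c'_def a_def L_def intro!: laurent_polys_uminus)
  moreover have "\<exists>j\<in>insert j0 J. c' j \<noteq> 0"
    using c(3) J(2) pivot by (auto simp: c'_def a_def)
  ultimately show ?thesis unfolding R_dependent_def by blast
qed

text \<open>Induction on the support I: a vector with nonzero i-th coordinate serves as pivot to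
  remove coordinate i from the support of the others.\<close>
lemma R_dependent_if_card_less:
  fixes g :: "'j \<Rightarrow> 'n \<Rightarrow> 'a::idom fls"
  assumes "finite I" "finite J" "\<forall>j\<in>J. \<forall>x. g j x \<in> laurent_polys"
    and "\<forall>j\<in>J. {x. g j x \<noteq> 0} \<subseteq> I" and "card I < card J"
  shows "R_dependent g J"
  using assms
proof (induction I arbitrary: J g rule: finite_induct)
  case empty
  then obtain j where "j \<in> J" by fastforce
  moreover have "lincomb (\<lambda>_. 1) g J = 0"
    using empty by (simp add: fun_eq_iff lincomb_def)
  ultimately show ?case
    unfolding R_dependent_def by (intro exI[of _ "\<lambda>_. 1"]) (auto simp: fun_eq_iff)
next
  case (insert i I)
  show ?case
  proof (cases "\<forall>j\<in>J. g j i = 0")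
    case True
    then have "\<forall>j\<in>J. {x. g j x \<noteq> 0} \<subseteq> I"
      using insert.prems(3) by blast
    then show ?thesis using insert by auto
  next
    case False
    then obtain j0 where j0: "j0 \<in> J" "g j0 i \<noteq> 0" by blast
    define J' where "J' = J - {j0}"
    have J: "J = insert j0 J'" "finite J'" "j0 \<notin> J'"
      using j0 insert.prems(1) by (auto simp: J'_def)
    have "R_dependent (\<lambda>j. eliminate_coord (g j0 i) i (g j0) (g j)) J'"
    proof (rule insert.IH)
      show "\<forall>j\<in>J'. \<forall>x. eliminate_coord (g j0 i) i (g j0) (g j) x \<in> laurent_polys"
        using insert.prems(2) j0
        by (auto simp: eliminate_coord_def J'_def intro!: laurent_polys_diff laurent_polys_mult)
      show "\<forall>j\<in>J'. {x. eliminate_coord (g j0 i) i (g j0) (g j) x \<noteq> 0} \<subseteq> I"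
      proof
        fix j assume "j \<in> J'"
        then show "{x. eliminate_coord (g j0 i) i (g j0) (g j) x \<noteq> 0} \<subseteq> I"
          using insert.prems(3) j0(1) by (intro eliminate_coord_support) (auto simp: J'_def)
      qed
      show "card I < card J'"
        using insert.prems(4) insert.hyps J by simp
    qed (use J in auto)
    then have "R_dependent g (insert j0 J')"
      using R_dependent_pivot[of J' j0 g i] insert.prems(2) j0 J by auto
    then show ?thesis using J(1) by simp
  qed
qed

section \<open>Rank\<close>

lemma R_lin_indep_card_le:
  fixes T :: "('n::finite \<Rightarrow> 'a::idom fls) set"
  assumes "T \<subseteq> Rn" "R_lin_indep T"
  shows "card T \<le> CARD('n)"
proof (rule ccontr)
  assume "\<not> card T \<le> CARD('n)"
  then have "card (UNIV :: 'n set) < card T" by simp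
  moreover have "finite T" using assms(2) by (simp add: R_lin_indep_def)
  moreover have "\<forall>v\<in>T. \<forall>x. v x \<in> laurent_polys" using assms(1) by (auto simp: Rn_def)
  ultimately have "R_dependent (\<lambda>v. v) T"
    by (intro R_dependent_if_card_less[of UNIV T "\<lambda>v. v"]) simp_all
  then show False using assms(2) unfolding R_lin_indep_iff by blast
qed

lemma finite_R_lin_indep_cards:
  fixes X :: "('n::finite \<Rightarrow> 'a::idom fls) set"
  assumes "X \<subseteq> Rn"
  shows "finite {card S | S. S \<subseteq> X \<and> R_lin_indep S}"
proof (rule finite_subset)
  show "{card S | S. S \<subseteq> X \<and> R_lin_indep S} \<subseteq> {..CARD('n)}"
  proof
    fix k assume "k \<in> {card S | S. S \<subseteq> X \<and> R_lin_indep S}"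
    then obtain S where "S \<subseteq> X" "R_lin_indep S" "k = card S" by blast
    moreover have "S \<subseteq> Rn" using \<open>S \<subseteq> X\<close> assms by blast
    ultimately show "k \<in> {..CARD('n)}" using R_lin_indep_card_le[of S] by simp
  qed
qed simp

lemma rk_attained:
  fixes X :: "('n::finite \<Rightarrow> 'a::idom fls) set"
  assumes "X \<subseteq> Rn"
  obtains S where "S \<subseteq> X" "R_lin_indep S" "card S = rk X"
proof -
  let ?K = "{card S | S. S \<subseteq> X \<and> R_lin_indep S}"
  have "R_lin_indep {}" by (simp add: R_lin_indep_def)
  then have ne: "?K \<noteq> {}" by blast
  have fin: "finite ?K" using finite_R_lin_indep_cards[OF assms] .
  have "Sup ?K \<in> ?K"
    unfolding cSup_eq_Max[OF fin ne] by (rule Max_in[OF fin ne])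
  then obtain S where "S \<subseteq> X" "R_lin_indep S" "card S = Sup ?K" by auto
  moreover have "rk X = Sup ?K" by (simp add: rk_def)
  ultimately show ?thesis using that by simp
qed

lemma card_le_rk:
  fixes X :: "('n::finite \<Rightarrow> 'a::idom fls) set"
  assumes "X \<subseteq> Rn" "T \<subseteq> X" "R_lin_indep T"
  shows "card T \<le> rk X"
  unfolding rk_def using assms finite_R_lin_indep_cards[OF assms(1)]
  by (intro le_cSup_finite) auto

lemma R_span_mem:
  assumes "finite J" "j \<in> J"
  shows "g j \<in> R_span g J"
proof -
  have "lincomb (\<lambda>k. if k = j then 1 else 0) g J x = (\<Sum>k\<in>J. if k = j then g k x else 0)" for x
    unfolding lincomb_def by (intro sum.cong) auto
  then have "lincomb (\<lambda>k. if k = j then 1 else 0) g J = g j"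
    using assms by (simp add: fun_eq_iff)
  then show ?thesis
    unfolding R_span_def by (auto intro!: exI[of _ "\<lambda>k. if k = j then 1 else 0"])
qed

lemma multiple_in_R_span_of_maximal_indep:
  fixes X :: "('n::finite \<Rightarrow> 'a::idom fls) set"
  assumes "X \<subseteq> Rn" "S \<subseteq> X" "R_lin_indep S" "card S = rk X" "w \<in> X"
  shows "\<exists>t\<in>laurent_polys. t \<noteq> 0 \<and> smult_vec t w \<in> R_span (\<lambda>v. v) S"
proof (cases "w \<in> S")
  case True
  then have "smult_vec 1 w \<in> R_span (\<lambda>v. v) S"
    using R_span_mem[of S w "\<lambda>v. v"] assms(3) by (simp add: R_lin_indep_def smult_vec_def)
  then show ?thesis by (intro bexI[of _ 1]) auto
next
  case False
  have fS: "finite S" using assms(3) by (simp add: R_lin_indep_def)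
  have "card (insert w S) > rk X"
    using assms(4) False fS by simp
  then have "\<not> R_lin_indep (insert w S)"
    using card_le_rk[of X "insert w S"] assms(1,2,5) by fastforce
  then obtain c where c: "\<forall>v\<in>insert w S. c v \<in> laurent_polys"
    "lincomb c (\<lambda>v. v) (insert w S) = 0" "\<exists>v\<in>insert w S. c v \<noteq> 0"
    using fS unfolding R_lin_indep_iff R_dependent_def by blast
  have sum0: "smult_vec (c w) w + lincomb c (\<lambda>v. v) S = 0"
    using c(2) fS False by (simp add: lincomb_insert)
  then have "smult_vec (c w) w = - lincomb c (\<lambda>v. v) S"
    by (simp add: eq_neg_iff_add_eq_0)
  also have "\<dots> = lincomb (\<lambda>v. - c v) (\<lambda>v. v) S"
    by (simp add: fun_eq_iff lincomb_def sum_negf)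
  finally have rel: "smult_vec (c w) w = lincomb (\<lambda>v. - c v) (\<lambda>v. v) S" .
  have "c w \<noteq> 0"
  proof
    assume "c w = 0"
    moreover have "smult_vec 0 w = 0" by (simp add: smult_vec_def fun_eq_iff)
    ultimately have "lincomb c (\<lambda>v. v) S = 0"
      using sum0 by simp
    then show False
      using assms(3) c \<open>c w = 0\<close> unfolding R_lin_indep_iff R_dependent_def by auto
  qed
  moreover have "lincomb (\<lambda>v. - c v) (\<lambda>v. v) S \<in> R_span (\<lambda>v. v) S"
    using c(1) unfolding R_span_def by blast
  moreover have "c w \<in> laurent_polys" using c(1) by simp
  ultimately show ?thesis using rel by metis
qed

section \<open>Division with remainder\<close>

lemma fls_eliminate_coeff:
  fixes c D :: "'a::field fls"
  assumes "D $$ j \<noteq> 0"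
  obtains q where "q \<in> laurent_polys" "(c - D * q) $$ k = 0"
    "\<And>n. (c - D * q) $$ n \<noteq> 0 \<Longrightarrow> c $$ n \<noteq> 0 \<or> D $$ (n - k + j) \<noteq> 0"
proof -
  define q where "q = fls_shift (j - k) (fls_const (c $$ k / D $$ j))"
  have nth: "(c - D * q) $$ n = c $$ n - D $$ (n - k + j) * (c $$ k / D $$ j)" for n
    by (simp add: q_def fls_shifted_times_simps add_diff_eq diff_add_eq)
  show ?thesis
  proof (rule that)
    show "q \<in> laurent_polys" by (simp add: q_def)
    show "(c - D * q) $$ k = 0" unfolding nth[of k] using assms by simp
    show "c $$ n \<noteq> 0 \<or> D $$ (n - k + j) \<noteq> 0" if "(c - D * q) $$ n \<noteq> 0" for n
      using that unfolding nth by auto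
  qed
qed

text \<open>Coefficients below degree 0 are cleared with the lowest coefficient of D, those from
  degree h - d on with the highest one (next lemma).\<close>
lemma remainder_support_nonneg:
  fixes c D :: "'a::field fls"
  assumes D: "D $$ d \<noteq> 0" "{k. D $$ k \<noteq> 0} \<subseteq> {d..h}"
    and c: "{k. c $$ k \<noteq> 0} \<subseteq> {a..b}"
  shows "\<exists>q\<in>laurent_polys. {k. (c - D * q) $$ k \<noteq> 0} \<subseteq> {0..max b (h - d)}"
  using c
proof (induction "nat (- a)" arbitrary: a b c rule: less_induct)
  case less
  show ?case
  proof (cases "a \<ge> 0")
    case True
    have "{k. (c - D * 0) $$ k \<noteq> 0} \<subseteq> {a..b}" using less.prems by simp
    also have "\<dots> \<subseteq> {0..max b (h - d)}" using True by auto
    finally show ?thesis by (intro bexI[of _ 0]) auto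
  next
    case False
    obtain q where q: "q \<in> laurent_polys" "(c - D * q) $$ a = 0"
      "\<And>n. (c - D * q) $$ n \<noteq> 0 \<Longrightarrow> c $$ n \<noteq> 0 \<or> D $$ (n - a + d) \<noteq> 0"
      using fls_eliminate_coeff[OF D(1)] by blast
    have "{k. (c - D * q) $$ k \<noteq> 0} \<subseteq> {a + 1..max b (h - d)}"
    proof
      fix n assume "n \<in> {k. (c - D * q) $$ k \<noteq> 0}"
      then have nz: "(c - D * q) $$ n \<noteq> 0" by simp
      then have "n \<noteq> a" using q(2) by auto
      moreover have "n \<in> {a..b} \<or> n - a + d \<in> {d..h}"
        using q(3)[OF nz] less.prems D(2) by blast
      ultimately show "n \<in> {a + 1..max b (h - d)}" using False by auto
    qed
    moreover have "nat (- (a + 1)) < nat (- a)" using False by simp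
    ultimately obtain q' where "q' \<in> laurent_polys"
      "{k. (c - D * q - D * q') $$ k \<noteq> 0} \<subseteq> {0..max (max b (h - d)) (h - d)}"
      using less.hyps by blast
    then show ?thesis
      using q(1) by (intro bexI[of _ "q + q'"]) (auto simp: algebra_simps)
  qed
qed

lemma remainder_support_below:
  fixes c D :: "'a::field fls"
  assumes D: "D $$ h \<noteq> 0" "{k. D $$ k \<noteq> 0} \<subseteq> {d..h}"
    and c: "{k. c $$ k \<noteq> 0} \<subseteq> {0..b}"
  shows "\<exists>q\<in>laurent_polys. {k. (c - D * q) $$ k \<noteq> 0} \<subseteq> {0..<h - d}"
  using c
proof (induction "nat (b - (h - d) + 1)" arbitrary: b c rule: less_induct)
  case less
  show ?case
  proof (cases "b < h - d")
    case True
    have "{k. (c - D * 0) $$ k \<noteq> 0} \<subseteq> {0..b}" using less.prems by simp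
    also have "\<dots> \<subseteq> {0..<h - d}" using True by auto
    finally show ?thesis by (intro bexI[of _ 0]) auto
  next
    case False
    obtain q where q: "q \<in> laurent_polys" "(c - D * q) $$ b = 0"
      "\<And>n. (c - D * q) $$ n \<noteq> 0 \<Longrightarrow> c $$ n \<noteq> 0 \<or> D $$ (n - b + h) \<noteq> 0"
      using fls_eliminate_coeff[OF D(1)] by blast
    have "{k. (c - D * q) $$ k \<noteq> 0} \<subseteq> {0..b - 1}"
    proof
      fix n assume "n \<in> {k. (c - D * q) $$ k \<noteq> 0}"
      then have nz: "(c - D * q) $$ n \<noteq> 0" by simp
      then have "n \<noteq> b" using q(2) by auto
      moreover have "n \<in> {0..b} \<or> n - b + h \<in> {d..h}"
        using q(3)[OF nz] less.prems D(2) by blast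
      ultimately show "n \<in> {0..b - 1}" using False by auto
    qed
    moreover have "nat (b - 1 - (h - d) + 1) < nat (b - (h - d) + 1)" using False by simp
    ultimately obtain q' where "q' \<in> laurent_polys"
      "{k. (c - D * q - D * q') $$ k \<noteq> 0} \<subseteq> {0..<h - d}"
      using less.hyps by blast
    then show ?thesis
      using q(1) by (intro bexI[of _ "q + q'"]) (auto simp: algebra_simps)
  qed
qed

lemma finite_fls_support_subset:
  assumes "finite A"
  shows "finite {f :: 'a::{zero,finite} fls. {k. f $$ k \<noteq> 0} \<subseteq> A}"
proof (rule finite_imageD)
  let ?F = "{f :: 'a fls. {k. f $$ k \<noteq> 0} \<subseteq> A}"
  show "inj_on (\<lambda>f. restrict (fls_nth f) A) ?F"
  proof (rule inj_onI, rule fls_eqI)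
    fix f g k assume fg: "f \<in> ?F" "g \<in> ?F" "restrict (fls_nth f) A = restrict (fls_nth g) A"
    show "f $$ k = g $$ k"
    proof (cases "k \<in> A")
      case True
      then show ?thesis using fun_cong[OF fg(3), of k] by simp
    next
      case False
      then have "f $$ k = 0" "g $$ k = 0" using fg(1,2) by blast+
      then show ?thesis by simp
    qed
  qed
  have "(\<lambda>f. restrict (fls_nth f) A) ` ?F \<subseteq> PiE A (\<lambda>_. UNIV)" by auto
  then show "finite ((\<lambda>f. restrict (fls_nth f) A) ` ?F)"
    by (rule finite_subset) (simp add: assms finite_PiE)
qed

lemma laurent_polys_finite_remainders:
  fixes D :: "'a::{field,finite} fls"
  assumes "D \<in> laurent_polys" "D \<noteq> 0"
  obtains Q where "finite Q" "\<And>c. c \<in> laurent_polys \<Longrightarrow> \<exists>q\<in>laurent_polys. \<exists>\<rho>\<in>Q. c = D * q + \<rho>"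
proof -
  define d where "d = fls_subdegree D"
  define h where "h = Max {k. D $$ k \<noteq> 0}"
  have fin: "finite {k. D $$ k \<noteq> 0}" using assms(1) by (simp add: laurent_polys_def)
  have Dd: "D $$ d \<noteq> 0" using assms(2) by (simp add: d_def)
  have supp: "{k. D $$ k \<noteq> 0} \<subseteq> {d..h}"
    using fin by (auto simp: d_def h_def fls_subdegree_leI)
  have Dh: "D $$ h \<noteq> 0"
    unfolding h_def using Max_in[OF fin] Dd by blast
  show ?thesis
  proof (rule that)
    show "finite {\<rho> :: 'a fls. {k. \<rho> $$ k \<noteq> 0} \<subseteq> {0..<h - d}}"
      by (rule finite_fls_support_subset) simp
    fix c :: "'a fls" assume "c \<in> laurent_polys"
    then have "finite {k. c $$ k \<noteq> 0}" by (simp add: laurent_polys_def)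
    then have "{k. c $$ k \<noteq> 0} \<subseteq> {Min (insert 0 {k. c $$ k \<noteq> 0})..Max (insert 0 {k. c $$ k \<noteq> 0})}"
      by auto
    then obtain q1 where q1: "q1 \<in> laurent_polys"
      "{k. (c - D * q1) $$ k \<noteq> 0} \<subseteq> {0..max (Max (insert 0 {k. c $$ k \<noteq> 0})) (h - d)}"
      using remainder_support_nonneg[OF Dd supp] by blast
    then obtain q2 where q2: "q2 \<in> laurent_polys" "{k. (c - D * q1 - D * q2) $$ k \<noteq> 0} \<subseteq> {0..<h - d}"
      using remainder_support_below[OF Dh supp] by blast
    show "\<exists>q\<in>laurent_polys. \<exists>\<rho>\<in>{\<rho>. {k. \<rho> $$ k \<noteq> 0} \<subseteq> {0..<h - d}}. c = D * q + \<rho>"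
      using q1(1) q2 by (intro bexI[of _ "q1 + q2"] bexI[of _ "c - D * q1 - D * q2"])
        (auto simp: algebra_simps)
  qed
qed

section \<open>Common denominators\<close>

definition clears_denominators :: "'a::comm_ring_1 fls \<Rightarrow> ('j \<Rightarrow> 'n::finite \<Rightarrow> 'a fls) \<Rightarrow> 'j set \<Rightarrow> bool" where
  "clears_denominators D g J \<longleftrightarrow> (\<forall>w\<in>Rn. \<forall>t\<in>laurent_polys. t \<noteq> 0 \<longrightarrow>
     smult_vec t w \<in> R_span g J \<longrightarrow> smult_vec D w \<in> R_span g J)"

lemma clears_denominators_empty:
  "clears_denominators (1 :: 'a::idom fls) (g :: 'j \<Rightarrow> 'n::finite \<Rightarrow> 'a fls) {}"
  by (simp add: clears_denominators_def smult_vec_def fun_eq_iff)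

lemma clears_denominators_insert_zero:
  fixes g :: "'j \<Rightarrow> 'n::finite \<Rightarrow> 'a::comm_ring_1 fls"
  assumes "finite J" "j0 \<notin> J" "g j0 = 0" "clears_denominators D g J"
  shows "clears_denominators D g (insert j0 J)"
proof -
  have zero: "smult_vec c0 (g j0) + u = u" for c0 u
    using assms(3) by (simp add: smult_vec_def fun_eq_iff)
  have "R_span g (insert j0 J) = R_span g J"
  proof
    show "R_span g (insert j0 J) \<subseteq> R_span g J"
      unfolding R_span_insert[OF assms(1,2)] using zero by auto
    show "R_span g J \<subseteq> R_span g (insert j0 J)"
    proof
      fix u assume "u \<in> R_span g J"
      then show "u \<in> R_span g (insert j0 J)"
        unfolding R_span_insert[OF assms(1,2)]
        by (intro CollectI exI[of _ 0] exI[of _ u]) (simp add: zero)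
    qed
  qed
  then show ?thesis using assms(4) by (simp add: clears_denominators_def)
qed

text \<open>Eliminating coordinate i against the pivot g j0 sends a multiple of w in the span of g
  over insert j0 J to a multiple of the eliminated w in the span of the eliminated family, and
  eliminate_coord_eqD pulls the cleared denominator back at the cost of the factor g j0 i.\<close>
lemma clears_denominators_insert_pivot:
  fixes g :: "'j \<Rightarrow> 'n::finite \<Rightarrow> 'a::idom fls"
  assumes J: "finite J" "j0 \<notin> J" and g: "g ` insert j0 J \<subseteq> Rn" and DR: "D \<in> laurent_polys"
    and D: "clears_denominators D (\<lambda>j. eliminate_coord (g j0 i) i (g j0) (g j)) J"
  shows "clears_denominators (g j0 i * D) g (insert j0 J)"
  unfolding clears_denominators_def
proof (intro ballI impI)
  define \<phi> where "\<phi> = eliminate_coord (g j0 i) i (g j0)"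
  have aR: "g j0 i \<in> laurent_polys" using g by (auto simp: Rn_def)
  fix w t assume w: "w \<in> Rn" and t: "t \<in> laurent_polys" "t \<noteq> 0"
    and "smult_vec t w \<in> R_span g (insert j0 J)"
  then obtain c0 u where u: "u \<in> R_span g J" "smult_vec t w = smult_vec c0 (g j0) + u"
    unfolding R_span_insert[OF J] by blast
  have "smult_vec t (\<phi> w) = \<phi> (smult_vec c0 (g j0) + u)"
    by (simp add: \<phi>_def eliminate_coord_smult flip: u(2))
  also have "\<dots> = \<phi> u"
    by (simp add: \<phi>_def eliminate_coord_add eliminate_coord_smult)
  finally have "smult_vec t (\<phi> w) \<in> \<phi> ` R_span g J" using u(1) by blast
  moreover have "\<phi> w \<in> Rn" using w g aR by (simp add: \<phi>_def eliminate_coord_Rn)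
  ultimately have "smult_vec D (\<phi> w) \<in> \<phi> ` R_span g J"
    using D t unfolding clears_denominators_def R_span_eliminate_coord \<phi>_def by blast
  then obtain u' where u': "u' \<in> R_span g J" "\<phi> (smult_vec D w) = \<phi> u'"
    by (auto simp: \<phi>_def eliminate_coord_smult)
  have u'Rn: "u' \<in> Rn" using R_span_subset_Rn[of g J] g J(1) u'(1) by blast
  have "smult_vec (g j0 i * D) w = smult_vec (D * w i - u' i) (g j0) + smult_vec (g j0 i) u'"
    using eliminate_coord_eqD[OF u'(2)[unfolded \<phi>_def]] by (simp add: smult_vec_def mult.assoc)
  moreover have "D * w i - u' i \<in> laurent_polys"
    using DR w u'Rn unfolding Rn_def by blast
  moreover have "smult_vec (g j0 i) u' \<in> R_span g J" using R_span_smult[OF aR u'(1)] .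
  ultimately show "smult_vec (g j0 i * D) w \<in> R_span g (insert j0 J)"
    unfolding R_span_insert[OF J] by blast
qed

lemma common_denominator:
  fixes g :: "'j \<Rightarrow> 'n::finite \<Rightarrow> 'a::idom fls"
  assumes "finite J" "g ` J \<subseteq> Rn"
  shows "\<exists>D\<in>laurent_polys. D \<noteq> 0 \<and> clears_denominators D g J"
  using assms
proof (induction J arbitrary: g rule: finite_induct)
  case empty
  show ?case using clears_denominators_empty by (intro bexI[of _ 1]) auto
next
  case (insert j0 J)
  show ?case
  proof (cases "g j0 = 0")
    case True
    obtain D where "D \<in> laurent_polys" "D \<noteq> 0" "clears_denominators D g J"
      using insert.IH[of g] insert.prems by auto
    then show ?thesis using clears_denominators_insert_zero[of J j0 g] insert.hyps True by blast
  next
    case False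
    then obtain i where i: "g j0 i \<noteq> 0" by (auto simp: fun_eq_iff)
    have aR: "g j0 i \<in> laurent_polys" using insert.prems by (auto simp: Rn_def)
    have "(\<lambda>j. eliminate_coord (g j0 i) i (g j0) (g j)) ` J \<subseteq> Rn"
      using insert.prems aR by (auto intro: eliminate_coord_Rn)
    then obtain D where D: "D \<in> laurent_polys" "D \<noteq> 0"
      "clears_denominators D (\<lambda>j. eliminate_coord (g j0 i) i (g j0) (g j)) J"
      using insert.IH by blast
    show ?thesis
      using clears_denominators_insert_pivot[OF insert.hyps insert.prems D(1,3)] i aR D(1,2)
      by (intro bexI[of _ "g j0 i * D"]) auto
  qed
qed

lemma finite_smult_vec_preimage:
  fixes D :: "'a::ring_no_zero_divisors"
  assumes "D \<noteq> 0" "finite A"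
  shows "finite {f. smult_vec D f \<in> A}"
proof (rule finite_imageD)
  show "finite (smult_vec D ` {f. smult_vec D f \<in> A})"
    using assms(2) by (rule finite_subset[rotated]) auto
  show "inj_on (smult_vec D) {f. smult_vec D f \<in> A}"
    using assms(1) by (auto intro!: inj_onI simp: smult_vec_def fun_eq_iff)
qed

lemma reduce_coefficients_mod:
  fixes g :: "'j \<Rightarrow> 'n \<Rightarrow> 'a::comm_ring_1 fls"
  assumes "smult_vec D w \<in> R_span g J"
    and Q: "\<And>c. c \<in> laurent_polys \<Longrightarrow> \<exists>q\<in>laurent_polys. \<exists>\<rho>\<in>Q. c = D * q + \<rho>"
  obtains f where "smult_vec D f \<in> (\<lambda>\<rho>. lincomb \<rho> g J) ` PiE J (\<lambda>_. Q)" "w - f \<in> R_span g J"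
proof -
  obtain c where c: "\<forall>j\<in>J. c j \<in> laurent_polys" "smult_vec D w = lincomb c g J"
    using assms(1) by (auto simp: R_span_def)
  have "\<forall>j\<in>J. \<exists>q\<in>laurent_polys. \<exists>\<rho>\<in>Q. c j = D * q + \<rho>"
    using c(1) Q by blast
  then obtain q \<rho> where q\<rho>: "\<forall>j\<in>J. q j \<in> laurent_polys \<and> \<rho> j \<in> Q \<and> c j = D * q j + \<rho> j"
    by metis
  have "smult_vec D (w - lincomb q g J) = lincomb c g J - lincomb (\<lambda>j. D * q j) g J"
    by (simp add: smult_vec_def fun_eq_iff right_diff_distrib lincomb_scale flip: c(2))
  also have "\<dots> = lincomb (restrict \<rho> J) g J"
    using q\<rho> by (simp add: fun_eq_iff lincomb_def sum_subtractf[symmetric] algebra_simps)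
  finally have "smult_vec D (w - lincomb q g J) \<in> (\<lambda>\<rho>. lincomb \<rho> g J) ` PiE J (\<lambda>_. Q)"
    using q\<rho> by auto
  moreover have "w - (w - lincomb q g J) \<in> R_span g J"
    using q\<rho> unfolding R_span_def by auto
  ultimately show ?thesis by (rule that)
qed

text \<open>Clear denominators with D and reduce the coefficients modulo D; the remainders range
  over a finite set.\<close>
lemma finite_representatives_mod_R_span:
  fixes g :: "'j \<Rightarrow> 'n::finite \<Rightarrow> 'a::{field,finite} fls"
  assumes "finite J" "g ` J \<subseteq> Rn"
  obtains F where "finite F"
    "\<And>w t. w \<in> Rn \<Longrightarrow> t \<in> laurent_polys \<Longrightarrow> t \<noteq> 0 \<Longrightarrow> smult_vec t w \<in> R_span g J
      \<Longrightarrow> \<exists>f\<in>F. w - f \<in> R_span g J"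
proof -
  obtain D where D: "D \<in> laurent_polys" "D \<noteq> 0" "clears_denominators D g J"
    using common_denominator[OF assms] by blast
  obtain Q where Q: "finite Q" "\<And>c. c \<in> laurent_polys \<Longrightarrow> \<exists>q\<in>laurent_polys. \<exists>\<rho>\<in>Q. c = D * q + \<rho>"
    using laurent_polys_finite_remainders[OF D(1,2)] by blast
  define F where "F = {f. smult_vec D f \<in> (\<lambda>\<rho>. lincomb \<rho> g J) ` PiE J (\<lambda>_. Q)}"
  show ?thesis
  proof (rule that)
    show "finite F"
      unfolding F_def using D(2) assms(1) Q(1)
      by (intro finite_smult_vec_preimage finite_imageI finite_PiE) auto
    fix w t assume "w \<in> Rn" "t \<in> laurent_polys" "t \<noteq> 0" "smult_vec t w \<in> R_span g J"
    then have "smult_vec D w \<in> R_span g J"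
      using D(3) by (simp add: clears_denominators_def)
    then obtain f where "smult_vec D f \<in> (\<lambda>\<rho>. lincomb \<rho> g J) ` PiE J (\<lambda>_. Q)" "w - f \<in> R_span g J"
      by (rule reduce_coefficients_mod[OF _ Q(2)])
    then show "\<exists>f\<in>F. w - f \<in> R_span g J"
      unfolding F_def by (intro bexI[of _ f]) simp_all
  qed
qed

lemma finite_cosets_of_equal_rank_supermodules:
  fixes U :: "('n::finite \<Rightarrow> 'a::{field,finite} fls) set"
  assumes "is_submodule U"
  obtains F where "finite F"
    "\<And>V w. is_submodule V \<Longrightarrow> U \<subseteq> V \<Longrightarrow> rk V = rk U \<Longrightarrow> w \<in> V \<Longrightarrow> \<exists>f\<in>F. w - f \<in> U"
proof -
  have URn: "U \<subseteq> Rn" using assms by (simp add: is_submodule_def)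
  obtain S where S: "S \<subseteq> U" "R_lin_indep S" "card S = rk U"
    using rk_attained[OF URn] by blast
  have fS: "finite S" using S(2) by (simp add: R_lin_indep_def)
  have SRn: "(\<lambda>v. v) ` S \<subseteq> Rn" using S(1) URn by auto
  obtain F where F: "finite F"
    "\<And>w t. w \<in> Rn \<Longrightarrow> t \<in> laurent_polys \<Longrightarrow> t \<noteq> 0 \<Longrightarrow> smult_vec t w \<in> R_span (\<lambda>v. v) S
      \<Longrightarrow> \<exists>f\<in>F. w - f \<in> R_span (\<lambda>v. v) S"
    using finite_representatives_mod_R_span[OF fS SRn] by blast
  have span: "R_span (\<lambda>v. v) S \<subseteq> U"
    using R_span_subset_submodule[OF assms fS] S(1) by simp
  show ?thesis
  proof (rule that[OF F(1)])
    fix V w assume V: "is_submodule V" "U \<subseteq> V" "rk V = rk U" and w: "w \<in> V"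
    have VRn: "V \<subseteq> Rn" using V(1) by (simp add: is_submodule_def)
    obtain t where "t \<in> laurent_polys" "t \<noteq> 0" "smult_vec t w \<in> R_span (\<lambda>v. v) S"
      using multiple_in_R_span_of_maximal_indep[OF VRn _ S(2) _ w] S(1,3) V(2,3) by auto
    then show "\<exists>f\<in>F. w - f \<in> U"
      using F(2) VRn w span by blast
  qed
qed

theorem lemma6p15:
  fixes U :: "('n::finite \<Rightarrow> 'p::prime_card mod_ring fls) set"
    and Us :: "nat \<Rightarrow> ('n \<Rightarrow> 'p mod_ring fls) set"
  assumes "is_submodule U"
    and "\<And>m. m \<ge> 1 \<Longrightarrow> is_submodule (Us m)"
    and "\<And>m. m \<ge> 1 \<Longrightarrow> U \<subseteq> Us m"
    and "\<And>m. m \<ge> 1 \<Longrightarrow> rk U = rk (Us m)"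
    and "set_converges Us U"
  shows "\<exists>M. \<forall>m\<ge>M. Us m = U"
proof -
  obtain F where F: "finite F"
    "\<And>V w. is_submodule V \<Longrightarrow> U \<subseteq> V \<Longrightarrow> rk V = rk U \<Longrightarrow> w \<in> V \<Longrightarrow> \<exists>f\<in>F. w - f \<in> U"
    using finite_cosets_of_equal_rank_supermodules[OF assms(1)] by blast
  have "eventually (\<lambda>m. \<forall>f\<in>F. f \<in> Us m \<longleftrightarrow> f \<in> U) sequentially"
    using assms(5) F(1) by (simp add: set_converges_def eventually_ball_finite)
  then obtain M where M: "\<And>m f. m \<ge> M \<Longrightarrow> f \<in> F \<Longrightarrow> f \<in> Us m \<longleftrightarrow> f \<in> U"
    by (auto simp: eventually_sequentially)
  have "Us m \<subseteq> U" if m: "m \<ge> max M 1" for m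
  proof
    fix w assume w: "w \<in> Us m"
    obtain f where f: "f \<in> F" "w - f \<in> U"
      using F(2)[OF assms(2,3) assms(4)[symmetric] w] m by auto
    then have "f \<in> Us m"
      using submodule_diff[OF assms(2) w, of "w - f"] assms(3) m by auto
    then have "f \<in> U" using M f(1) m by simp
    then have "f + (w - f) \<in> U" using f(2) by (rule submodule_add[OF assms(1)])
    then show "w \<in> U" by simp
  qed
  then show ?thesis using assms(3) by (intro exI[of _ "max M 1"]) auto
qed

end
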